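(* Let $R$ be a lattice diagram of a knot or link. (1) If two problem crossings of $R$ are adjacent in the crossing graph $C(R)$ but are not adjacent in the problem crossing graph $PC(R)$, then neither is a bad neighbor of the other, and they have the same crossing type. (2) If $R$ does not have a Celtic configuration, then $PC(R)$ has every vertex of degree at most $2$, is deleted-square free, and every connected component of $PC(R)$ that is a cycle has a vertex that is not a corner of $PC(R)$.
   Context: A lattice diagram of a knot or link is a knot or link diagram (with over/under information at finitely many transverse double points, the crossings) contained in the $\mathbb{Z}^2$ lattice (vertices the integer points, edges the unit segments parallel to the axes) with all crossings at lattice vertices. At a crossing $c$, the $x$-strand (resp. $y$-strand) is the union of the two horizontal (resp. vertical) lattice edges of $R$ with endpoint $c$; $c$ is an $x$-crossing (resp. $y$-crossing) if the over-strand is the $x$-strand (resp. $y$-strand); this is its crossing type. The crossing graph $C(R)$ is the subgraph of the $\mathbb{Z}^2$ lattice with a vertex at each crossing of $R$ and an edge between any two crossings at lattice distance $1$. In a subgraph $G$ of the $\mathbb{Z}^2$ lattice, two vertices are adjacent if joined by an edge of $G$; two neighbors $a,b$ of a vertex $v$ are nearby neighbors if edges $va$, $vb$ are perpendicular and opposing neighbors if parallel; $v$ is a corner of $G$ if it has exactly two neighbors in $G$ and they are nearby neighbors; $G$ is deleted-square free if it does not contain three edges of a single unit square of the $\mathbb{Z}^2$ lattice. A crossing $c$ is a problem crossing if it has a pair of nearby neighbors in $C(R)$ both of crossing type opposite to that of $c$; any crossing in such a pair is a bad neighbor of $c$. The problem crossing graph $PC(R)$ is the subgraph of $C(R)$ whose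 vertices are the problem crossings and with an edge between two problem crossings that are bad neighbors of each other. A Celtic configuration is a set of four crossings at the four vertices of a unit square of the $\mathbb{Z}^2$ lattice such that any two of them joined by a side of the square have opposite crossing types. *)

theory Defs
  imports Main
begin

type_synonym pt = "int \<times> int"

text \<open>Crossing type: x-crossing (over-strand horizontal) or y-crossing (over-strand vertical).\<close>
datatype ctype = XCross | YCross

definition ladj :: "pt \<Rightarrow> pt \<Rightarrow> bool" where
  "ladj p q \<longleftrightarrow> \<bar>fst p - fst q\<bar> + \<bar>snd p - snd q\<bar> = 1"

text \<open>At each lattice vertex the diagram
  has degree 0, 2 (ordinary point, possibly a turn) or 4 (a crossing, where the horizontal
  and vertical strands cross transversally).  The over/under information is a separate
  function assigning a crossing type to each crossing.\<close>
definition lattice_diagram :: "pt set set \<Rightarrow> bool" where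
  "lattice_diagram E \<longleftrightarrow> finite E \<and> E \<noteq> {} \<and>
     (\<forall>e\<in>E. \<exists>p q. e = {p, q} \<and> ladj p q) \<and>
     (\<forall>v. card {e\<in>E. v \<in> e} \<in> {0, 2, 4})"

definition crossings :: "pt set set \<Rightarrow> pt set" where
  "crossings E = {v. card {e\<in>E. v \<in> e} = 4}"

definition cadj :: "pt set set \<Rightarrow> pt \<Rightarrow> pt \<Rightarrow> bool" where
  "cadj E c d \<longleftrightarrow> c \<in> crossings E \<and> d \<in> crossings E \<and> ladj c d"

definition perp_at :: "pt \<Rightarrow> pt \<Rightarrow> pt \<Rightarrow> bool" where
  "perp_at v a b \<longleftrightarrow> ladj v a \<and> ladj v b \<and>
     (fst a - fst v) * (fst b - fst v) + (snd a - snd v) * (snd b - snd v) = 0"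

definition bad_pair :: "pt set set \<Rightarrow> (pt \<Rightarrow> ctype) \<Rightarrow> pt \<Rightarrow> pt \<Rightarrow> pt \<Rightarrow> bool" where
  "bad_pair E ty c a b \<longleftrightarrow> cadj E c a \<and> cadj E c b \<and> perp_at c a b \<and>
     ty a \<noteq> ty c \<and> ty b \<noteq> ty c"

definition problem_crossing :: "pt set set \<Rightarrow> (pt \<Rightarrow> ctype) \<Rightarrow> pt \<Rightarrow> bool" where
  "problem_crossing E ty c \<longleftrightarrow> c \<in> crossings E \<and> (\<exists>a b. bad_pair E ty c a b)"

definition bad_neighbor :: "pt set set \<Rightarrow> (pt \<Rightarrow> ctype) \<Rightarrow> pt \<Rightarrow> pt \<Rightarrow> bool" where
  "bad_neighbor E ty c d \<longleftrightarrow> problem_crossing E ty c \<and> (\<exists>b. bad_pair E ty c d b \<or> bad_pair E ty c b d)"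

definition pc_vert :: "pt set set \<Rightarrow> (pt \<Rightarrow> ctype) \<Rightarrow> pt set" where
  "pc_vert E ty = {c. problem_crossing E ty c}"

definition pc_adj :: "pt set set \<Rightarrow> (pt \<Rightarrow> ctype) \<Rightarrow> pt \<Rightarrow> pt \<Rightarrow> bool" where
  "pc_adj E ty c d \<longleftrightarrow> cadj E c d \<and> problem_crossing E ty c \<and> problem_crossing E ty d \<and>
     bad_neighbor E ty c d \<and> bad_neighbor E ty d c"

definition pc_degree :: "pt set set \<Rightarrow> (pt \<Rightarrow> ctype) \<Rightarrow> pt \<Rightarrow> nat" where
  "pc_degree E ty v = card {w. pc_adj E ty v w}"

definition pc_corner :: "pt set set \<Rightarrow> (pt \<Rightarrow> ctype) \<Rightarrow> pt \<Rightarrow> bool" where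
  "pc_corner E ty v \<longleftrightarrow> v \<in> pc_vert E ty \<and>
     (\<exists>a b. a \<noteq> b \<and> {w. pc_adj E ty v w} = {a, b} \<and> perp_at v a b)"

definition square_sides :: "pt \<Rightarrow> (pt \<times> pt) set" where
  "square_sides p = (let (i, j) = p in
     {((i, j), (i + 1, j)), ((i + 1, j), (i + 1, j + 1)),
      ((i + 1, j + 1), (i, j + 1)), ((i, j + 1), (i, j))})"

definition pc_deleted_square_free :: "pt set set \<Rightarrow> (pt \<Rightarrow> ctype) \<Rightarrow> bool" where
  "pc_deleted_square_free E ty \<longleftrightarrow>
     (\<forall>p. \<not> (\<exists>S \<subseteq> square_sides p. card S = 3 \<and> (\<forall>(a, b)\<in>S. pc_adj E ty a b)))"

definition pc_component :: "pt set set \<Rightarrow> (pt \<Rightarrow> ctype) \<Rightarrow> pt \<Rightarrow> pt set" where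
  "pc_component E ty v = {w. (pc_adj E ty)\<^sup>*\<^sup>* v w}"

text \<open>A set K of vertices (a component, so its edges are all PC edges inside K) forms a cycle.\<close>
definition pc_is_cycle :: "pt set set \<Rightarrow> (pt \<Rightarrow> ctype) \<Rightarrow> pt set \<Rightarrow> bool" where
  "pc_is_cycle E ty K \<longleftrightarrow> (\<exists>vs. distinct vs \<and> length vs \<ge> 3 \<and> set vs = K \<and>
     (\<forall>a\<in>K. \<forall>b\<in>K. pc_adj E ty a b \<longleftrightarrow>
        (\<exists>i<length vs. {a, b} = {vs ! i, vs ! ((i + 1) mod length vs)})))"

definition celtic_configuration :: "pt set set \<Rightarrow> (pt \<Rightarrow> ctype) \<Rightarrow> bool" where
  "celtic_configuration E ty \<longleftrightarrow> (\<exists>i j.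
     (i, j) \<in> crossings E \<and> (i + 1, j) \<in> crossings E \<and>
     (i + 1, j + 1) \<in> crossings E \<and> (i, j + 1) \<in> crossings E \<and>
     ty (i, j) \<noteq> ty (i + 1, j) \<and> ty (i + 1, j) \<noteq> ty (i + 1, j + 1) \<and>
     ty (i + 1, j + 1) \<noteq> ty (i, j + 1) \<and> ty (i, j + 1) \<noteq> ty (i, j))"

end

theory Submission
  imports Defs "HOL-Library.Product_Plus"
begin

text \<open>If three crossings a, b, c form two
  perpendicular sides of a unit square, the fourth corner d is a crossing, and the crossing
  types change along the path a, b, c, d, then (there being only two types) they also change
  from d back to a, so the square is a Celtic configuration.

  Two C(R)-adjacent problem crossings of opposite type are bad neighbours of each other: each
  has a perpendicular pair of bad neighbours, and any lattice neighbour is perpendicular to one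
  of them.  This gives (1).  For (2), a vertex of degree 3 in PC(R), a deleted square in PC(R),
  and a cycle all of whose vertices are corners each produce such a path: in the last case the
  cycle turns at every vertex, and if it never turned back along a unit square its steps would
  alternate between two perpendicular directions, so it would drift off and never close up.\<close>

definition lattice_units :: "pt set" where
  "lattice_units = {(1, 0), (-1, 0), (0, 1), (0, -1)}"

definition dot :: "pt \<Rightarrow> pt \<Rightarrow> int" where
  "dot u w = fst u * fst w + snd u * snd w"

lemma dot_commute: "dot u w = dot w u"
  unfolding dot_def by simp

lemma dot_diff_swap: "dot u (p - q) = - dot u (q - p)"
  unfolding dot_def by (simp add: algebra_simps)

lemma ladj_iff_units: "ladj p q \<longleftrightarrow> q - p \<in> lattice_units"
  unfolding ladj_def lattice_units_def by (cases p; cases q) (auto simp: abs_if)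

lemma ladj_sym: "ladj p q \<longleftrightarrow> ladj q p"
  unfolding ladj_def by (simp add: abs_minus_commute)

lemma perp_at_iff_units:
  "perp_at v a b \<longleftrightarrow> a - v \<in> lattice_units \<and> b - v \<in> lattice_units \<and> dot (a - v) (b - v) = 0"
  unfolding perp_at_def ladj_iff_units dot_def by simp

lemma perp_at_sym: "perp_at v a b \<longleftrightarrow> perp_at v b a"
  unfolding perp_at_iff_units by (auto simp: dot_commute)

lemma units_perp_one_of:
  "e \<in> lattice_units \<Longrightarrow> f \<in> lattice_units \<Longrightarrow> g \<in> lattice_units \<Longrightarrow> dot e f = 0 \<Longrightarrow>
   dot g e = 0 \<or> dot g f = 0"
  unfolding lattice_units_def dot_def by auto

lemma units_perp_same_parallel:
  "e \<in> lattice_units \<Longrightarrow> f \<in> lattice_units \<Longrightarrow> g \<in> lattice_units \<Longrightarrow>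
   dot e g = 0 \<Longrightarrow> dot f g = 0 \<Longrightarrow> f = e \<or> f = - e"
  unfolding lattice_units_def dot_def by auto

lemma units_three_distinct:
  "e \<in> lattice_units \<Longrightarrow> f \<in> lattice_units \<Longrightarrow> g \<in> lattice_units \<Longrightarrow> distinct [e, f, g] \<Longrightarrow>
   (dot e f = 0 \<and> g = - f) \<or> (dot f e = 0 \<and> g = - e) \<or> (dot g e = 0 \<and> f = - e)"
  unfolding lattice_units_def dot_def by auto

lemma perp_at_one_of:
  assumes "perp_at v a b" "ladj v c"
  shows "perp_at v c a \<or> perp_at v c b"
  using assms units_perp_one_of[of "a - v" "b - v" "c - v"]
  unfolding perp_at_iff_units ladj_iff_units by auto

lemma perp_at_adjacent_parallel:
  assumes "perp_at v w a" "perp_at w v p"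
  shows "p - w = a - v \<or> p - w = v - a"
proof -
  have "dot (a - v) (w - v) = 0" "dot (p - w) (w - v) = 0"
    using assms dot_diff_swap[of "p - w" w v] unfolding perp_at_iff_units by (simp_all add: dot_commute)
  then show ?thesis
    using assms units_perp_same_parallel[of "a - v" "p - w" "w - v"]
    unfolding perp_at_iff_units by auto
qed

lemma lattice_neighbours_three:
  assumes "ladj v x" "ladj v y" "ladj v z" "distinct [x, y, z]"
  shows "(perp_at v x y \<and> z - v = v - y) \<or> (perp_at v y x \<and> z - v = v - x) \<or>
         (perp_at v z x \<and> y - v = v - x)"
proof -
  have "distinct [x - v, y - v, z - v]" using assms(4) by auto
  then show ?thesis
    using assms(1-3) units_three_distinct[of "x - v" "y - v" "z - v"]
    unfolding perp_at_iff_units ladj_iff_units by (auto simp: algebra_simps)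
qed

lemma ctype_neq_neq: "x \<noteq> y \<Longrightarrow> y \<noteq> z \<Longrightarrow> x = (z :: ctype)"
  by (cases x; cases y; cases z) auto

lemma celtic_configurationI:
  assumes "perp_at b a c" "d = a + c - b"
    and "a \<in> crossings E" "b \<in> crossings E" "c \<in> crossings E" "d \<in> crossings E"
    and "ty a \<noteq> ty b" "ty b \<noteq> ty c" "ty c \<noteq> ty d"
  shows "celtic_configuration E ty"
proof -
  define u w where "u = a - b" and "w = c - b"
  have units: "u \<in> lattice_units" "w \<in> lattice_units" "dot u w = 0"
    using assms(1) unfolding perp_at_iff_units u_def w_def by auto
  have corners: "a = b + u" "c = b + w" "d = b + u + w"
    using assms(2) unfolding u_def w_def by (simp_all add: algebra_simps)
  have "ty d \<noteq> ty a" using ctype_neq_neq[OF assms(7,8)] assms(9) by simp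
  then show ?thesis
    using units assms(3-9) unfolding celtic_configuration_def corners
    by (intro exI[of _ "fst b + min 0 (fst u + fst w)"] exI[of _ "snd b + min 0 (snd u + snd w)"])
      (cases b, auto simp: lattice_units_def dot_def)
qed

lemma pc_adj_sym: "pc_adj E ty c d \<longleftrightarrow> pc_adj E ty d c"
  unfolding pc_adj_def cadj_def using ladj_sym by blast

lemma pc_adj_crossings: "pc_adj E ty c d \<Longrightarrow> c \<in> crossings E \<and> d \<in> crossings E \<and> ladj c d"
  unfolding pc_adj_def cadj_def by auto

lemma bad_neighbor_ty_neq: "bad_neighbor E ty c d \<Longrightarrow> ty c \<noteq> ty d"
  unfolding bad_neighbor_def bad_pair_def by auto

lemma pc_adj_ty_neq: "pc_adj E ty c d \<Longrightarrow> ty c \<noteq> ty d"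
  unfolding pc_adj_def using bad_neighbor_ty_neq by blast

lemma bad_neighbor_if_ty_neq:
  assumes "problem_crossing E ty d" "c \<in> crossings E" "ladj d c" "ty c \<noteq> ty d"
  shows "bad_neighbor E ty d c"
proof -
  obtain a b where ab: "bad_pair E ty d a b"
    using assms(1) unfolding problem_crossing_def by blast
  then have "perp_at d c a \<or> perp_at d c b"
    using assms(3) perp_at_one_of unfolding bad_pair_def by blast
  then have "bad_pair E ty d c a \<or> bad_pair E ty d c b"
    using ab assms(2-4) unfolding bad_pair_def cadj_def by auto
  then show ?thesis using assms(1) unfolding bad_neighbor_def by blast
qed

lemma pc_adj_obtain_bad_partner:
  assumes "pc_adj E ty w v"
  obtains p where "p \<in> crossings E" "perp_at w v p" "ty p \<noteq> ty w"
proof -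
  from assms obtain p where "bad_pair E ty w v p \<or> bad_pair E ty w p v"
    unfolding pc_adj_def bad_neighbor_def by blast
  then show thesis using that perp_at_sym unfolding bad_pair_def cadj_def by blast
qed

lemma pc_path_around_square_celtic:
  assumes "pc_adj E ty a b" "pc_adj E ty b c" "pc_adj E ty c d" "perp_at b a c" "d = a + c - b"
  shows "celtic_configuration E ty"
  using celtic_configurationI[OF assms(4,5)] assms(1-3) pc_adj_crossings pc_adj_ty_neq by metis

lemma problem_crossings_cadj_not_pc_adj:
  assumes "problem_crossing E ty c" "problem_crossing E ty d" "cadj E c d" "\<not> pc_adj E ty c d"
  shows "\<not> bad_neighbor E ty c d \<and> \<not> bad_neighbor E ty d c \<and> ty c = ty d"
proof -
  have "ty c = ty d"
  proof (rule ccontr)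
    assume "ty c \<noteq> ty d"
    then have "bad_neighbor E ty c d" "bad_neighbor E ty d c"
      using bad_neighbor_if_ty_neq assms(1-3) ladj_sym unfolding cadj_def by metis+
    then show False using assms unfolding pc_adj_def by blast
  qed
  then show ?thesis using bad_neighbor_ty_neq by metis
qed

text \<open>The bad partner of the stem w, perpendicular to wv at w, closes a unit square with one of
  the two arms.\<close>

lemma pc_no_T_junction:
  assumes nc: "\<not> celtic_configuration E ty"
    and adj: "pc_adj E ty v w" "pc_adj E ty v a" "pc_adj E ty v b"
    and "perp_at v w a" "b - v = v - a"
  shows False
proof -
  obtain p where p: "p \<in> crossings E" "perp_at w v p" "ty p \<noteq> ty w"
    using pc_adj_obtain_bad_partner adj(1) pc_adj_sym by metis
  have square: "celtic_configuration E ty" if x: "pc_adj E ty v x" "p - w = x - v" for x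
  proof (rule celtic_configurationI)
    show "perp_at w p v" using p(2) perp_at_sym by blast
    show "x = p + v - w" using x(2) by (simp add: algebra_simps)
    show "ty p \<noteq> ty w" by (fact p(3))
    show "ty w \<noteq> ty v" "ty v \<noteq> ty x" using pc_adj_ty_neq adj(1) x(1) by metis+
  qed (use p(1) adj(1) x(1) pc_adj_crossings in blast)+
  show False
    using perp_at_adjacent_parallel[OF assms(5) p(2)] square adj(2,3) assms(6) nc by metis
qed

lemma pc_degree_le_2:
  assumes nc: "\<not> celtic_configuration E ty"
  shows "pc_degree E ty v \<le> 2"
proof (rule ccontr)
  assume "\<not> pc_degree E ty v \<le> 2"
  then have "3 \<le> card {w. pc_adj E ty v w}" unfolding pc_degree_def by simp
  then obtain T where "T \<subseteq> {w. pc_adj E ty v w}" "card T = 3"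
    by (rule obtain_subset_with_card_n)
  then obtain x y z where adj: "pc_adj E ty v x" "pc_adj E ty v y" "pc_adj E ty v z"
    and "distinct [x, y, z]"
    by (auto simp: card_3_iff)
  then have "(perp_at v x y \<and> z - v = v - y) \<or> (perp_at v y x \<and> z - v = v - x) \<or>
      (perp_at v z x \<and> y - v = v - x)"
    using lattice_neighbours_three pc_adj_crossings by blast
  then show False
    using pc_no_T_junction[OF nc] adj by blast
qed

lemma three_of_four_cyclic:
  assumes "S \<subseteq> {s0, s1, s2, s3}" "card S = 3"
  shows "{s0, s1, s2} \<subseteq> S \<or> {s1, s2, s3} \<subseteq> S \<or> {s2, s3, s0} \<subseteq> S \<or> {s3, s0, s1} \<subseteq> S"
  using assms by (auto simp: card_3_iff)

lemma pc_deleted_square_free: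
  assumes nc: "\<not> celtic_configuration E ty"
  shows "pc_deleted_square_free E ty"
  unfolding pc_deleted_square_free_def
proof (intro allI notI)
  fix p assume "\<exists>S\<subseteq>square_sides p. card S = 3 \<and> (\<forall>(a, b)\<in>S. pc_adj E ty a b)"
  then obtain S where S: "S \<subseteq> square_sides p" "card S = 3" "\<forall>(a, b)\<in>S. pc_adj E ty a b"
    by blast
  obtain i j where "p = (i, j)" by (cases p)
  define P0 P1 P2 P3 where "P0 = (i, j)" and "P1 = (i + 1, j)"
    and "P2 = (i + 1, j + 1)" and "P3 = (i, j + 1)"
  have "square_sides p = {(P0, P1), (P1, P2), (P2, P3), (P3, P0)}"
    unfolding \<open>p = (i, j)\<close> square_sides_def P0_def P1_def P2_def P3_def by simp
  then have sides: "{(P0, P1), (P1, P2), (P2, P3)} \<subseteq> S \<or> {(P1, P2), (P2, P3), (P3, P0)} \<subseteq> S \<or>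
      {(P2, P3), (P3, P0), (P0, P1)} \<subseteq> S \<or> {(P3, P0), (P0, P1), (P1, P2)} \<subseteq> S"
    using three_of_four_cyclic S(1,2) by simp
  have around: False
    if "{(a, b), (b, c), (c, d)} \<subseteq> S" "perp_at b a c" "d = a + c - b" for a b c d
    using pc_path_around_square_celtic[of E ty a b c d] that S(3) nc by blast
  have "perp_at P1 P0 P2" "perp_at P2 P1 P3" "perp_at P3 P2 P0" "perp_at P0 P3 P1"
    and "P3 = P0 + P2 - P1" "P0 = P1 + P3 - P2" "P1 = P2 + P0 - P3" "P2 = P3 + P1 - P0"
    unfolding P0_def P1_def P2_def P3_def perp_at_def ladj_def by simp_all
  with sides show False
    by (elim disjE) (erule around; assumption)+
qed

lemma pc_is_cycle_walk:
  assumes "pc_is_cycle E ty K"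
  obtains n :: nat and V :: "nat \<Rightarrow> pt"
  where "n \<ge> 3" "\<And>i. V (i + n) = V i" "\<And>i. V i \<in> K"
    "\<And>i. pc_adj E ty (V i) (V (Suc i))" "\<And>i. V (Suc (Suc i)) \<noteq> V i"
proof -
  obtain vs where dist: "distinct vs" and len: "length vs \<ge> 3" and set_vs: "set vs = K"
    and iff: "\<forall>a\<in>K. \<forall>b\<in>K. pc_adj E ty a b \<longleftrightarrow>
        (\<exists>i<length vs. {a, b} = {vs ! i, vs ! ((i + 1) mod length vs)})"
    using assms unfolding pc_is_cycle_def by blast
  define n where "n = length vs"
  define V where "V i = vs ! (i mod n)" for i
  have mod_less: "i mod n < n" for i
    using len unfolding n_def by (intro mod_less_divisor) linarith
  show thesis
  proof (rule that)
    show "n \<ge> 3" using len n_def by simp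
    show "V (i + n) = V i" for i unfolding V_def by simp
    show VK: "V i \<in> K" for i unfolding V_def using set_vs mod_less nth_mem n_def by blast
    show "pc_adj E ty (V i) (V (Suc i))" for i
    proof -
      have "(i mod n + 1) mod n = Suc i mod n" by (simp add: mod_Suc_eq)
      then have "\<exists>j<n. {V i, V (Suc i)} = {vs ! j, vs ! ((j + 1) mod n)}"
        using mod_less unfolding V_def by (intro exI[of _ "i mod n"]) auto
      then show ?thesis using iff VK n_def by blast
    qed
    show "V (Suc (Suc i)) \<noteq> V i" for i
    proof
      assume "V (Suc (Suc i)) = V i"
      then have "Suc (Suc i) mod n = i mod n"
        unfolding V_def using nth_eq_iff_index_eq[OF dist] mod_less n_def by metis
      then have "n dvd 2" using mod_eq_dvd_iff_nat[of i "Suc (Suc i)" n] by simp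
      then show False using len n_def by (auto dest: dvd_imp_le)
    qed
  qed
qed

lemma pc_corner_perp:
  assumes "pc_corner E ty w" "pc_adj E ty w a" "pc_adj E ty w b" "a \<noteq> b"
  shows "perp_at w a b"
proof -
  obtain x y where "{u. pc_adj E ty w u} = {x, y}" "perp_at w x y"
    using assms(1) unfolding pc_corner_def by blast
  moreover from calculation(1) have "a \<in> {x, y}" "b \<in> {x, y}"
    using assms(2,3) by blast+
  ultimately show ?thesis using assms(4) perp_at_sym[of w x y] by auto
qed

lemma constant_double_step_no_return:
  fixes V :: "nat \<Rightarrow> pt"
  assumes "\<And>i. V (Suc (Suc i)) - V i = s" "s \<noteq> 0" "V (2 * k) = V 0"
  shows "k = 0"
proof -
  have "fst (V (2 * m)) = fst (V 0) + int m * fst s \<and> snd (V (2 * m)) = snd (V 0) + int m * snd s"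
    for m
  proof (induction m)
    case (Suc m)
    have "V (2 * Suc m) = V (2 * m) + s"
      using assms(1)[of "2 * m"] by (simp add: algebra_simps)
    then show ?case using Suc by (simp add: algebra_simps)
  qed simp
  then have "int k * fst s = 0" "int k * snd s = 0" using assms(3) by (metis add_cancel_left_right)+
  then show ?thesis using assms(2) by (auto simp: prod_eq_iff)
qed

text \<open>A walk that turns at every step and never turns back along a unit square has all its
  double steps equal, so it drifts and cannot close up.\<close>

lemma pc_cycle_has_non_corner:
  assumes nc: "\<not> celtic_configuration E ty" and "pc_is_cycle E ty K"
  shows "\<exists>w\<in>K. \<not> pc_corner E ty w"
proof (rule ccontr)
  assume "\<not> ?thesis"
  then have corner: "\<And>w. w \<in> K \<Longrightarrow> pc_corner E ty w" by blast
  obtain n V where n: "n \<ge> 3" and period: "\<And>i. V (i + n) = V i" and VK: "\<And>i. V i \<in> K"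
    and adj: "\<And>i. pc_adj E ty (V i) (V (Suc i))" and no_return: "\<And>i. V (Suc (Suc i)) \<noteq> V i"
    using pc_is_cycle_walk[OF assms(2)] by metis
  have turn: "perp_at (V (Suc i)) (V i) (V (Suc (Suc i)))" for i
  proof (rule pc_corner_perp)
    show "pc_corner E ty (V (Suc i))" using corner VK by blast
    show "pc_adj E ty (V (Suc i)) (V i)" using adj pc_adj_sym by blast
    show "pc_adj E ty (V (Suc i)) (V (Suc (Suc i)))" by (rule adj)
    show "V i \<noteq> V (Suc (Suc i))" using no_return by metis
  qed
  have step_period: "V (Suc (Suc (Suc i))) - V (Suc (Suc i)) = V (Suc i) - V i" for i
  proof -
    have "V (Suc (Suc (Suc i))) \<noteq> V i + V (Suc (Suc i)) - V (Suc i)"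
      using pc_path_around_square_celtic[OF adj[of i] adj[of "Suc i"] adj[of "Suc (Suc i)"] turn[of i]]
        nc by blast
    then have "V (Suc (Suc (Suc i))) - V (Suc (Suc i)) \<noteq> V i - V (Suc i)"
      by (auto simp: algebra_simps)
    moreover have "perp_at (V (Suc i)) (V (Suc (Suc i))) (V i)"
      using turn[of i] perp_at_sym by blast
    ultimately show ?thesis
      using perp_at_adjacent_parallel[OF _ turn[of "Suc i"]] by blast
  qed
  have double_step: "V (Suc (Suc i)) - V i = V 2 - V 0" for i
  proof (induction i)
    case (Suc i)
    have "V (Suc (Suc (Suc i))) - V (Suc i) =
        (V (Suc (Suc (Suc i))) - V (Suc (Suc i))) + (V (Suc (Suc i)) - V (Suc i))"
      by simp
    also have "\<dots> = V (Suc (Suc i)) - V i" using step_period[of i] by simp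
    finally show ?case using Suc.IH by simp
  qed (simp add: numeral_2_eq_2)
  have "V 2 - V 0 \<noteq> 0" using no_return[of 0] by (simp add: numeral_2_eq_2)
  moreover have "V (2 * n) = V 0" using period[of 0] period[of n] by (simp add: mult_2)
  ultimately have "n = 0"
    by (rule constant_double_step_no_return[of V "V 2 - V 0", OF double_step])
  then show False using n by simp
qed

text \<open>The argument only involves the crossings and their types.\<close>

theorem lemma3p8:
  fixes E :: "pt set set" and ty :: "pt \<Rightarrow> ctype"
  assumes "lattice_diagram E"
  shows "(\<forall>c d. problem_crossing E ty c \<and> problem_crossing E ty d \<and> cadj E c d \<and>
            \<not> pc_adj E ty c d \<longrightarrow>
            \<not> bad_neighbor E ty c d \<and> \<not> bad_neighbor E ty d c \<and> ty c = ty d)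
       \<and> (\<not> celtic_configuration E ty \<longrightarrow>
            (\<forall>v\<in>pc_vert E ty. pc_degree E ty v \<le> 2) \<and>
            pc_deleted_square_free E ty \<and>
            (\<forall>v\<in>pc_vert E ty. pc_is_cycle E ty (pc_component E ty v) \<longrightarrow>
               (\<exists>w\<in>pc_component E ty v. \<not> pc_corner E ty w)))"
  using problem_crossings_cadj_not_pc_adj pc_degree_le_2 pc_deleted_square_free
    pc_cycle_has_non_corner
  by blast

end
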